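(* Let $15\le y<x$ and let $\Psi(x,y)$ be the number of positive integers $n\le x$ having no prime divisor $>y$. Then \[ \Psi(x,y)\le C\,x\,e^{-u/2},\qquad u=\frac{\log x}{\log y},\quad C=67.21. \] *)

theory Defs
  imports Complex_Main "HOL-Computational_Algebra.Primes"
begin

definition Psi :: "real \<Rightarrow> real \<Rightarrow> nat" where
  "Psi x y = card {n::nat. 1 \<le> n \<and> real n \<le> x \<and> (\<forall>p. prime p \<and> p dvd n \<longrightarrow> real p \<le> y)}"

end

theory Submission
  imports Defs
begin

text \<open>Rankin's method, run as an induction on \<open>t\<close>. Put \<open>\<sigma> = 1 - 1/(2 log y)\<close> and
  \<open>C = 67.21\<close>; then \<open>x\<^sup>\<sigma> = x exp(-u/2)\<close>, so it suffices to show \<open>\<Psi>(t,y) \<le> C t\<^sup>\<sigma>\<close> for all \<open>t\<close>,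
  assuming it for all \<open>s \<le> t/2\<close>. If \<open>log t \<le> 8 log y\<close>, the trivial bound \<open>\<Psi>(t,y) \<le> t\<close> suffices
  because \<open>t\<^sup>1\<^sup>-\<^sup>\<sigma> \<le> e\<^sup>4 \<le> C\<close>. Otherwise, Chebyshev's identity
  \<open>\<Sum>\<^sub>n log n = \<Sum>\<^sub>p\<^sub>,\<^sub>k log p \<Psi>(t/p\<^sup>k, y)\<close> (the sum over the \<open>y\<close>-smooth \<open>n \<le> t\<close>) and the induction
  hypothesis give \<open>\<Sum>\<^sub>n log n \<le> C t\<^sup>\<sigma> \<Sum>\<^sub>p\<^sub>\<le>\<^sub>y log p / (p\<^sup>\<sigma> - 1)\<close>, and the elementary bound
  \<open>\<Sum>\<^sub>p\<^sub>\<le>\<^sub>N log p / p \<le> 2 log N - 1\<close> makes the last sum at most \<open>5 log y + 5/3 \<le> 15/16 (log t - 4)\<close>.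
  On the other hand every smooth \<open>n > t/e\<^sup>4\<close> contributes at least \<open>log t - 4\<close>, and by induction
  there are at most \<open>C t\<^sup>\<sigma>/e\<^sup>4\<^sup>\<sigma> \<le> C t\<^sup>\<sigma>/16\<close> smooth \<open>n \<le> t/e\<^sup>4\<close>; together,
  \<open>(log t - 4) \<Psi>(t,y) \<le> C t\<^sup>\<sigma> (log t - 4)\<close>.\<close>

lemma exp_of_nat_mult_bounds:
  fixes a :: real
  assumes "0 \<le> a" "a \<le> 1"
  shows "(1 + a) ^ n \<le> exp (real n * a)" and "exp (real n * a) \<le> (1 + a + a\<^sup>2) ^ n"
proof -
  have "exp (real n * a) = exp a ^ n" by (simp add: exp_of_nat_mult)
  then show "(1 + a) ^ n \<le> exp (real n * a)" "exp (real n * a) \<le> (1 + a + a\<^sup>2) ^ n"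
    using assms by (auto intro!: power_mono exp_bound)
qed

lemma sum_inverse_powers_le:
  fixes r :: real
  assumes "1 < r"
  shows "(\<Sum>k=1..M. inverse r ^ k) \<le> 1 / (r - 1)"
proof -
  have q: "inverse r \<noteq> 1" "0 < inverse r" "inverse r < 1" using assms by (auto simp: field_simps)
  have "(\<Sum>k=1..M. inverse r ^ k) \<le> inverse r / (1 - inverse r)"
    unfolding sum_gp using q by (auto simp: divide_right_mono)
  also have "\<dots> = 1 / (r - 1)" using assms by (simp add: field_simps)
  finally show ?thesis .
qed

lemma ln_fact_le:
  assumes "1 \<le> n"
  shows "ln (fact n :: real) \<le> real n * ln (real n) - real n + ln (real n) + 1"
  using assms
proof (induction n rule: dec_induct)
  case base
  then show ?case by simp
next
  case (step n)
  have n: "real n \<ge> 1" using step by simp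
  have "ln (real n) - ln (real n + 1) = ln (real n / (real n + 1))"
    using n by (simp add: ln_div)
  also have "\<dots> \<le> real n / (real n + 1) - 1"
    by (rule ln_le_minus_one) (use n in auto)
  also have "\<dots> = - 1 / (real n + 1)" using n by (simp add: field_simps)
  finally have "1 \<le> (real n + 1) * (ln (real n + 1) - ln (real n))"
    using n by (simp add: field_simps)
  moreover have "ln (fact (Suc n) :: real) = ln (real n + 1) + ln (fact n)"
    by (simp add: ln_mult add.commute)
  ultimately show ?case
    using step.IH by (simp add: algebra_simps)
qed

lemma ln_eq_sum_multiplicity:
  assumes "n \<noteq> 0"
  shows "ln (real n) = (\<Sum>p\<in>prime_factors n. real (multiplicity p n) * ln (real p))"
proof -
  have "real n = real (\<Prod>p\<in>prime_factors n. p ^ multiplicity p n)"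
    using prod_prime_factors[OF assms] by simp
  also have "\<dots> = (\<Prod>p\<in>prime_factors n. real p ^ multiplicity p n)"
    by (simp only: of_nat_prod of_nat_power)
  also have "ln \<dots> = (\<Sum>p\<in>prime_factors n. ln (real p ^ multiplicity p n))"
    by (rule ln_prod) (auto dest: in_prime_factors_imp_prime simp: prime_gt_0_nat)
  finally show ?thesis by (simp add: ln_realpow)
qed

lemma sum_ln_prime_factors_le:
  assumes "n \<noteq> 0"
  shows "(\<Sum>p\<in>prime_factors n. ln (real p)) \<le> ln (real n)"
  unfolding ln_eq_sum_multiplicity[OF assms]
proof (rule sum_mono)
  fix p assume p: "p \<in> prime_factors n"
  then have "1 \<le> real (multiplicity p n)" "0 \<le> ln (real p)"
    by (auto simp: prime_factors_multiplicity Suc_le_eq dest: prime_gt_0_nat)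
  then have "1 * ln (real p) \<le> real (multiplicity p n) * ln (real p)"
    by (rule mult_right_mono)
  then show "ln (real p) \<le> real (multiplicity p n) * ln (real p)" by simp
qed

lemma card_multiples_ge: "N div d \<le> card {m \<in> {1..N}. d dvd m}"
proof (cases "d = 0")
  case True
  then show ?thesis by simp
next
  case False
  have "card {1..N div d} \<le> card {m \<in> {1..N}. d dvd m}"
  proof (rule card_inj_on_le[where f = "\<lambda>j. j * d"])
    show "inj_on (\<lambda>j. j * d) {1..N div d}" using False by (auto simp: inj_on_def)
    show "(\<lambda>j. j * d) ` {1..N div d} \<subseteq> {m \<in> {1..N}. d dvd m}"
    proof (rule image_subsetI)
      fix j assume j: "j \<in> {1..N div d}"
      then have "j * d \<le> N div d * d" by simp
      also have "\<dots> \<le> N" by simp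
      finally show "j * d \<in> {m \<in> {1..N}. d dvd m}" using j False by simp
    qed
  qed simp
  then show ?thesis by simp
qed

section \<open>A Chebyshev--Mertens bound\<close>

lemma sum_ln_mult_div_le_ln_fact:
  "(\<Sum>p | prime p \<and> p \<le> N. ln (real p) * real (N div p)) \<le> ln (fact N :: real)"
proof -
  define P where "P = {p. prime p \<and> p \<le> N}"
  have finP: "finite P" unfolding P_def by simp
  have "(\<Sum>p\<in>P. ln (real p) * real (N div p))
      \<le> (\<Sum>p\<in>P. ln (real p) * real (card {m \<in> {1..N}. p dvd m}))"
    by (intro sum_mono mult_left_mono)
       (use card_multiples_ge prime_ge_1_nat in \<open>auto simp: P_def\<close>)
  also have "\<dots> = (\<Sum>p\<in>P. \<Sum>m\<in>{1..N}. if p dvd m then ln (real p) else 0)"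
    by (simp add: sum.inter_filter[symmetric] mult.commute)
  also have "\<dots> = (\<Sum>m\<in>{1..N}. \<Sum>p\<in>P. if p dvd m then ln (real p) else 0)"
    by (rule sum.swap)
  also have "\<dots> = (\<Sum>m\<in>{1..N}. \<Sum>p\<in>prime_factors m. ln (real p))"
  proof (rule sum.cong[OF refl])
    fix m assume "m \<in> {1..N}"
    then have "{p \<in> P. p dvd m} = prime_factors m"
      by (auto simp: P_def prime_factors_dvd dest: dvd_imp_le)
    then show "(\<Sum>p\<in>P. if p dvd m then ln (real p) else 0) = (\<Sum>p\<in>prime_factors m. ln (real p))"
      using finP by (simp add: sum.inter_filter[symmetric])
  qed
  also have "\<dots> \<le> (\<Sum>m\<in>{1..N}. ln (real m))"
    by (intro sum_mono sum_ln_prime_factors_le) auto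
  also have "\<dots> = ln (\<Prod>m\<in>{1..N}. real m)"
    by (subst ln_prod) auto
  also have "\<dots> = ln (fact N)"
    by (simp add: fact_prod)
  finally show ?thesis unfolding P_def .
qed

lemma sum_ln_div_prime_le:
  assumes N: "15 \<le> N"
  shows "(\<Sum>p | prime p \<and> p \<le> N. ln (real p) / real p) \<le> 2 * ln (real N) - 1"
proof -
  define P where "P = {p. prime p \<and> p \<le> N}"
  have Npos: "0 < real N" using N by simp
  have "ln (real p) / real p \<le> 2 / real N * (ln (real p) * real (N div p))" if "p \<in> P" for p
  proof -
    have p: "prime p" "p \<le> N" using that by (auto simp: P_def)
    then have "p > 0" "N div p \<ge> 1" by (auto simp: prime_gt_0_nat Suc_le_eq div_greater_zero_iff)
    then have "p \<le> p * (N div p)" by simp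
    then have "N mod p < p * (N div p)"
      using mod_less_divisor[OF \<open>p > 0\<close>, of N] by linarith
    then have "N \<le> 2 * (p * (N div p))" using mult_div_mod_eq[of p N] by linarith
    then have "real N \<le> 2 * real p * real (N div p)"
      by (metis of_nat_le_iff of_nat_mult of_nat_numeral mult.assoc)
    then have "real N * ln (real p) \<le> (2 * real p * real (N div p)) * ln (real p)"
      using p by (intro mult_right_mono) (auto dest: prime_ge_1_nat)
    then show ?thesis using Npos \<open>p > 0\<close> by (simp add: field_simps)
  qed
  then have "(\<Sum>p\<in>P. ln (real p) / real p) \<le> 2 / real N * (\<Sum>p\<in>P. ln (real p) * real (N div p))"
    by (simp add: sum_distrib_left sum_mono)
  also have "\<dots> \<le> 2 / real N * (real N * ln (real N) - real N + ln (real N) + 1)"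
    using sum_ln_mult_div_le_ln_fact[of N] ln_fact_le[of N] N Npos unfolding P_def
    by (intro mult_left_mono) auto
  also have "\<dots> = 2 * ln (real N) - 2 + 2 * (ln (real N) + 1) / real N"
    using Npos by (simp add: field_simps)
  also have "\<dots> \<le> 2 * ln (real N) - 1"
  proof -
    have "ln (real N) - ln 4 = ln (real N / 4)" using Npos by (simp add: ln_div)
    also have "\<dots> \<le> real N / 4 - 1" by (rule ln_le_minus_one) (use Npos in simp)
    finally have "ln (real N) + 1 \<le> real N / 2"
      using N ln_le_minus_one[of "4::real"] by simp
    then show ?thesis using Npos by (simp add: field_simps)
  qed
  finally show ?thesis unfolding P_def .
qed

section \<open>Smooth numbers\<close>

definition smooth_numbers :: "real \<Rightarrow> real \<Rightarrow> nat set" where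
  "smooth_numbers t y = {n. 1 \<le> n \<and> real n \<le> t \<and> (\<forall>p. prime p \<and> p dvd n \<longrightarrow> real p \<le> y)}"

lemma Psi_eq_card: "Psi t y = card (smooth_numbers t y)"
  by (simp add: Psi_def smooth_numbers_def)

lemma smooth_numbers_subset: "smooth_numbers t y \<subseteq> {1..nat \<lfloor>t\<rfloor>}"
  by (auto simp: smooth_numbers_def le_nat_floor)

lemma finite_smooth_numbers [simp]: "finite (smooth_numbers t y)"
  using smooth_numbers_subset finite_subset by blast

lemma Psi_eq_0:
  assumes "t < 1"
  shows "Psi t y = 0"
proof -
  have "smooth_numbers t y = {}" using assms by (auto simp: smooth_numbers_def)
  then show ?thesis by (simp add: Psi_eq_card)
qed

lemma Psi_le:
  assumes "0 \<le> t"
  shows "real (Psi t y) \<le> t"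
proof -
  have "Psi t y \<le> card {1..nat \<lfloor>t\<rfloor>}"
    unfolding Psi_eq_card by (rule card_mono[OF _ smooth_numbers_subset]) simp
  then show ?thesis using assms by simp linarith
qed

lemma smooth_numbers_le:
  "s \<le> t \<Longrightarrow> {n \<in> smooth_numbers t y. real n \<le> s} = smooth_numbers s y"
  by (auto simp: smooth_numbers_def)

lemma card_smooth_multiples_le:
  assumes d: "0 < d"
  shows "card {n \<in> smooth_numbers t y. d dvd n} \<le> Psi (t / real d) y"
  unfolding Psi_eq_card
proof (rule card_inj_on_le[where f = "\<lambda>n. n div d"])
  show "inj_on (\<lambda>n. n div d) {n \<in> smooth_numbers t y. d dvd n}"
    by (rule inj_onI) (metis (no_types, lifting) dvd_div_mult_self mem_Collect_eq)
  show "(\<lambda>n. n div d) ` {n \<in> smooth_numbers t y. d dvd n} \<subseteq> smooth_numbers (t / real d) y"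
  proof clarify
    fix n assume n: "n \<in> smooth_numbers t y" "d dvd n"
    then have n1: "1 \<le> n" and nt: "real n \<le> t"
      and smooth: "\<And>p. prime p \<Longrightarrow> p dvd n \<Longrightarrow> real p \<le> y"
      by (auto simp: smooth_numbers_def)
    have "d \<le> n" using n(2) n1 by (intro dvd_imp_le) auto
    then have "1 \<le> n div d" using d by (simp add: Suc_le_eq div_greater_zero_iff)
    moreover have "real (n div d) \<le> t / real d"
      using n(2) nt d by (simp add: real_of_nat_div divide_right_mono)
    moreover have "p dvd n" if "p dvd n div d" for p
      using that n(2) dvd_div_mult_self dvd_mult2 by metis
    ultimately show "n div d \<in> smooth_numbers (t / real d) y"
      using smooth by (simp add: smooth_numbers_def)
  qed
qed simp

lemma card_prime_power_divisors:
  assumes p: "prime p" and n: "1 \<le> n" "n \<le> M"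
  shows "card {k \<in> {1..M}. p ^ k dvd n} = multiplicity p n"
proof -
  have "multiplicity p n < 2 ^ multiplicity p n" by (rule less_exp)
  also have "\<dots> \<le> p ^ multiplicity p n" using prime_ge_2_nat[OF p] by (rule power_mono) simp
  also have "\<dots> \<le> n" using n by (intro dvd_imp_le multiplicity_dvd) auto
  finally have "multiplicity p n \<le> M" using n by simp
  moreover have "p ^ k dvd n \<longleftrightarrow> k \<le> multiplicity p n" for k
    by (rule power_dvd_iff_le_multiplicity) (use p n in auto)
  ultimately have "{k \<in> {1..M}. p ^ k dvd n} = {1..multiplicity p n}"
    by (intro set_eqI) (simp only: mem_Collect_eq atLeastAtMost_iff, linarith)
  then show ?thesis by simp
qed

lemma finite_primes_le [simp]: "finite {p::nat. prime p \<and> real p \<le> y}"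
  by (rule finite_subset[of _ "{..nat \<lfloor>y\<rfloor>}"]) (auto simp: le_nat_floor)

lemma sum_ln_smooth_le:
  "(\<Sum>n\<in>smooth_numbers t y. ln (real n))
     \<le> (\<Sum>p | prime p \<and> real p \<le> y. \<Sum>k=1..nat \<lfloor>t\<rfloor>. real (Psi (t / real p ^ k) y) * ln (real p))"
proof -
  define P where "P = {p::nat. prime p \<and> real p \<le> y}"
  define M where "M = nat \<lfloor>t\<rfloor>"
  define S where "S = smooth_numbers t y"
  have ln_n: "ln (real n) = (\<Sum>p\<in>P. \<Sum>k=1..M. if p ^ k dvd n then ln (real p) else 0)"
    if n: "n \<in> S" for n
  proof -
    have n1: "1 \<le> n" and nM: "n \<le> M" using n smooth_numbers_subset[of t y] by (auto simp: S_def M_def)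
    have "prime_factors n \<subseteq> P"
      using n by (auto simp: S_def P_def smooth_numbers_def in_prime_factors_iff)
    then have "(\<Sum>p\<in>prime_factors n. real (multiplicity p n) * ln (real p))
        = (\<Sum>p\<in>P. real (multiplicity p n) * ln (real p))"
      using n1 by (intro sum.mono_neutral_left) (auto simp: P_def in_prime_factors_iff not_dvd_imp_multiplicity_0)
    then have "ln (real n) = (\<Sum>p\<in>P. real (multiplicity p n) * ln (real p))"
      using n1 by (simp add: ln_eq_sum_multiplicity)
    also have "\<dots> = (\<Sum>p\<in>P. real (card {k \<in> {1..M}. p ^ k dvd n}) * ln (real p))"
      by (intro sum.cong refl) (use card_prime_power_divisors[of _ n M] n1 nM in \<open>auto simp: P_def\<close>)
    finally show ?thesis by (simp add: sum.inter_filter[symmetric])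
  qed
  have "(\<Sum>n\<in>S. ln (real n)) = (\<Sum>n\<in>S. \<Sum>p\<in>P. \<Sum>k=1..M. if p ^ k dvd n then ln (real p) else 0)"
    by (rule sum.cong[OF refl ln_n])
  also have "\<dots> = (\<Sum>p\<in>P. \<Sum>k=1..M. \<Sum>n\<in>S. if p ^ k dvd n then ln (real p) else 0)"
    by (subst sum.swap) (rule sum.cong[OF refl sum.swap])
  also have "\<dots> = (\<Sum>p\<in>P. \<Sum>k=1..M. real (card {n \<in> S. p ^ k dvd n}) * ln (real p))"
    by (simp add: S_def sum.inter_filter[symmetric])
  also have "\<dots> \<le> (\<Sum>p\<in>P. \<Sum>k=1..M. real (Psi (t / real p ^ k) y) * ln (real p))"
  proof (rule sum_mono, rule sum_mono, rule mult_right_mono)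
    fix p k assume "p \<in> P"
    then have "prime p" by (simp add: P_def)
    then show "real (card {n \<in> S. p ^ k dvd n}) \<le> real (Psi (t / real p ^ k) y)"
      using card_smooth_multiples_le[of "p ^ k" t y] by (simp add: S_def prime_gt_0_nat)
    show "0 \<le> ln (real p)" using prime_ge_1_nat[OF \<open>prime p\<close>] by simp
  qed
  finally show ?thesis unfolding P_def M_def S_def .
qed

lemma Psi_mul_ln_le:
  assumes "0 < s" "s \<le> t"
  shows "real (Psi t y) * ln s \<le> (\<Sum>n\<in>smooth_numbers t y. ln (real n)) + ln s * real (Psi s y)"
proof -
  have "real (Psi t y) * ln s = (\<Sum>n\<in>smooth_numbers t y. ln s)"
    by (simp add: Psi_eq_card)
  also have "\<dots> \<le> (\<Sum>n\<in>smooth_numbers t y. ln (real n) + (if real n \<le> s then ln s else 0))"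
  proof (rule sum_mono)
    fix n assume "n \<in> smooth_numbers t y"
    then have "1 \<le> real n" by (simp add: smooth_numbers_def)
    then show "ln s \<le> ln (real n) + (if real n \<le> s then ln s else 0)"
      using assms(1) by (cases "real n \<le> s") auto
  qed
  also have "\<dots> = (\<Sum>n\<in>smooth_numbers t y. ln (real n))
      + (\<Sum>n\<in>{n \<in> smooth_numbers t y. real n \<le> s}. ln s)"
    by (simp only: sum.distrib sum.inter_filter finite_smooth_numbers)
  also have "\<dots> = (\<Sum>n\<in>smooth_numbers t y. ln (real n)) + ln s * real (Psi s y)"
    by (simp add: smooth_numbers_le[OF assms(2)] Psi_eq_card)
  finally show ?thesis .
qed

section \<open>Rankin's induction\<close>

lemma real_halving_induct [case_names small step]:
  fixes P :: "real \<Rightarrow> bool"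
  assumes small: "\<And>t. t < 1 \<Longrightarrow> P t"
    and step: "\<And>t. 1 \<le> t \<Longrightarrow> (\<And>s. s \<le> t / 2 \<Longrightarrow> P s) \<Longrightarrow> P t"
  shows "P t"
proof -
  have "\<forall>t. t < real m \<longrightarrow> P t" for m
  proof (induction m)
    case 0
    then show ?case using small by simp
  next
    case (Suc m)
    show ?case
    proof (intro allI impI)
      fix t assume t: "t < real (Suc m)"
      show "P t"
      proof (cases "t < 1")
        case True
        then show ?thesis by (rule small)
      next
        case False
        then have m: "1 \<le> real m" using t by (cases m) auto
        show ?thesis
        proof (rule step)
          show "1 \<le> t" using False by simp
          fix s assume "s \<le> t / 2"
          then have "s < real m" using t m by simp
          then show "P s" using Suc.IH by blast
        qed
      qed
    qed
  qed
  then show ?thesis using reals_Archimedean2[of t] by blast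
qed

lemma ln_div_powr_minus_one_le:
  fixes L :: real
  assumes L: "5/2 \<le> L" and p: "prime p" and pL: "ln (real p) \<le> L"
  shows "ln (real p) / (real p powr (1 - 1 / (2 * L)) - 1)
     \<le> 5/2 * (ln (real p) / real p) + (if p = 2 then 5/3 else 0) + (if p = 3 then 5/2 else 0)"
proof -
  define E where "E = exp (- (ln (real p) / (2 * L)))"
  have p2: "2 \<le> real p" using prime_ge_2_nat[OF p] by simp
  have lnp: "0 \<le> ln (real p)" using p2 by simp
  have "real p powr (1 - 1 / (2 * L)) = exp (ln (real p) + - (ln (real p) / (2 * L)))"
    using p2 by (simp add: powr_def algebra_simps)
  also have "\<dots> = real p * E"
    using p2 by (simp only: exp_add E_def exp_ln_iff) simp
  finally have pow: "real p powr (1 - 1 / (2 * L)) = real p * E" .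
  have frac: "ln (real p) / (real p * E - 1) \<le> a / c"
    if "ln (real p) \<le> a" "0 < c" "c \<le> real p * E - 1" for a c
    using that lnp by (intro frac_le) auto
  have E: "1 - ln (real p) / (2 * L) \<le> E"
    unfolding E_def using exp_ge_add_one_self[of "- (ln (real p) / (2 * L))"] by simp
  have nonneg: "0 \<le> 5/2 * (ln (real p) / real p)" using lnp p2 by simp
  have "p \<noteq> 4" using prime_odd_nat[OF p] by auto
  then consider "p = 2" | "p = 3" | "5 \<le> p"
    using prime_ge_2_nat[OF p] by force
  then have "ln (real p) / (real p * E - 1)
     \<le> 5/2 * (ln (real p) / real p) + (if p = 2 then 5/3 else 0) + (if p = 3 then 5/2 else 0)"
  proof cases
    case 1
    have ln2: "ln (real p) \<le> 1" using 1 ln_le_minus_one[of 2] by simp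
    then have "ln (real p) / (2 * L) \<le> 1/5" using L by (simp add: field_simps)
    then have "3/5 \<le> real p * E - 1" using 1 E by simp
    then have "ln (real p) / (real p * E - 1) \<le> 5/3" using frac[OF ln2, of "3/5"] by simp
    moreover have "(if p = 2 then 5/3 else 0) + (if p = 3 then 5/2 else 0) = (5/3 :: real)"
      using 1 by simp
    ultimately show ?thesis using nonneg by linarith
  next
    case 2
    have ln3: "ln (real p) \<le> 2" using 2 ln_le_minus_one[of 3] by simp
    then have "ln (real p) / (2 * L) \<le> 2/5" using L by (simp add: field_simps)
    then have "4/5 \<le> real p * E - 1" using 2 E by simp
    then have "ln (real p) / (real p * E - 1) \<le> 5/2" using frac[OF ln3, of "4/5"] by simp
    moreover have "(if p = 2 then 5/3 else 0) + (if p = 3 then 5/2 else 0) = (5/2 :: real)"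
      using 2 by simp
    ultimately show ?thesis using nonneg by linarith
  next
    case 3
    have "exp (1/2 :: real) \<le> 5/3"
      using exp_of_nat_mult_bounds(2)[of "1/32" 16] by (simp add: power_divide)
    then have "3/5 \<le> exp (- (1/2) :: real)" by (simp add: exp_minus field_simps)
    also have "\<dots> \<le> E" unfolding E_def using pL L by (simp add: field_simps)
    finally have "real p * (3/5) \<le> real p * E" using p2 by (intro mult_left_mono) auto
    moreover have "5 \<le> real p" using 3 by simp
    ultimately have "2/5 * real p \<le> real p * E - 1" by linarith
    then have "ln (real p) / (real p * E - 1) \<le> ln (real p) / (2/5 * real p)"
      using frac[of "ln (real p)" "2/5 * real p"] p2 by simp
    then show ?thesis using 3 by simp
  qed
  then show ?thesis by (simp add: pow)
qed

lemma five_halves_le_ln: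
  fixes y :: real
  assumes "15 \<le> y"
  shows "5/2 \<le> ln y"
proof -
  have "exp (5/2 :: real) \<le> 15"
    using exp_of_nat_mult_bounds(2)[of "1/10" 25] by (simp add: power_divide)
  then show ?thesis using assms by (subst ln_ge_iff) auto
qed

lemma sum_ln_div_powr_minus_one_le:
  fixes y :: real
  assumes y: "15 \<le> y"
  shows "(\<Sum>p | prime p \<and> real p \<le> y. ln (real p) / (real p powr (1 - 1 / (2 * ln y)) - 1))
         \<le> 5 * ln y + 5/3"
proof -
  define P where "P = {p. prime p \<and> real p \<le> y}"
  define N where "N = nat \<lfloor>y\<rfloor>"
  have PN: "P = {p. prime p \<and> p \<le> N}"
    using y by (auto simp: P_def N_def le_nat_iff le_floor_iff)
  have N: "15 \<le> N" "ln (real N) \<le> ln y"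
    using y by (auto simp: N_def le_nat_iff le_floor_iff)
  have L: "5/2 \<le> ln y" using y by (rule five_halves_le_ln)
  have "(\<Sum>p\<in>P. ln (real p) / (real p powr (1 - 1 / (2 * ln y)) - 1))
     \<le> (\<Sum>p\<in>P. 5/2 * (ln (real p) / real p) + (if p = 2 then 5/3 else 0) + (if p = 3 then 5/2 else 0))"
    by (intro sum_mono ln_div_powr_minus_one_le[OF L])
       (use y in \<open>auto simp: P_def dest: prime_gt_0_nat\<close>)
  also have "\<dots> = 5/2 * (\<Sum>p\<in>P. ln (real p) / real p) + 5/3 + 5/2"
    using y by (simp add: P_def sum.distrib sum_distrib_left)
  also have "\<dots> \<le> 5/2 * (2 * ln y - 1) + 5/3 + 5/2"
    using sum_ln_div_prime_le[OF N(1)] N(2) unfolding PN by simp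
  also have "\<dots> = 5 * ln y + 5/3" by (simp add: field_simps)
  finally show ?thesis unfolding P_def .
qed

lemma sum_ln_smooth_le_powr:
  fixes t y \<sigma> C :: real
  assumes "0 < \<sigma>" "0 \<le> C" "0 \<le> t"
    and Psi_le: "\<And>p k. prime p \<Longrightarrow> real p \<le> y \<Longrightarrow> 1 \<le> k \<Longrightarrow>
      real (Psi (t / real p ^ k) y) \<le> C * (t / real p ^ k) powr \<sigma>"
  shows "(\<Sum>n\<in>smooth_numbers t y. ln (real n))
    \<le> C * t powr \<sigma> * (\<Sum>p | prime p \<and> real p \<le> y. ln (real p) / (real p powr \<sigma> - 1))"
proof -
  let ?P = "{p. prime p \<and> real p \<le> y}" and ?M = "nat \<lfloor>t\<rfloor>"
  have "(\<Sum>n\<in>smooth_numbers t y. ln (real n))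
      \<le> (\<Sum>p\<in>?P. \<Sum>k=1..?M. real (Psi (t / real p ^ k) y) * ln (real p))"
    by (rule sum_ln_smooth_le)
  also have "\<dots> \<le> (\<Sum>p\<in>?P. \<Sum>k=1..?M. C * t powr \<sigma> * ln (real p) * inverse (real p powr \<sigma>) ^ k)"
  proof (rule sum_mono, rule sum_mono)
    fix p k assume p: "p \<in> ?P" and k: "k \<in> {1..?M}"
    have "0 < real p" "0 \<le> ln (real p)"
      using p prime_ge_1_nat by (auto simp: prime_gt_0_nat)
    moreover have "(real p ^ k) powr \<sigma> = (real p powr \<sigma>) ^ k"
      using \<open>0 < real p\<close> by (simp add: powr_realpow[symmetric] powr_powr powr_power mult.commute)
    moreover have "(t / real p ^ k) powr \<sigma> = t powr \<sigma> / (real p ^ k) powr \<sigma>"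
      using assms(3) \<open>0 < real p\<close> by (simp add: powr_divide)
    ultimately have "(t / real p ^ k) powr \<sigma> = t powr \<sigma> * inverse (real p powr \<sigma>) ^ k"
      by (simp add: power_inverse divide_inverse)
    then have "real (Psi (t / real p ^ k) y) \<le> C * t powr \<sigma> * inverse (real p powr \<sigma>) ^ k"
      using Psi_le[of p k] p k by (simp add: mult.assoc)
    then have "real (Psi (t / real p ^ k) y) * ln (real p)
        \<le> (C * t powr \<sigma> * inverse (real p powr \<sigma>) ^ k) * ln (real p)"
      using \<open>0 \<le> ln (real p)\<close> by (rule mult_right_mono)
    then show "real (Psi (t / real p ^ k) y) * ln (real p)
        \<le> C * t powr \<sigma> * ln (real p) * inverse (real p powr \<sigma>) ^ k"
      by (simp only: mult_ac)
  qed
  also have "\<dots> = (\<Sum>p\<in>?P. C * t powr \<sigma> * ln (real p) * (\<Sum>k=1..?M. inverse (real p powr \<sigma>) ^ k))"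
    by (simp add: sum_distrib_left)
  also have "\<dots> \<le> (\<Sum>p\<in>?P. C * t powr \<sigma> * ln (real p) * (1 / (real p powr \<sigma> - 1)))"
  proof (rule sum_mono, rule mult_left_mono)
    fix p assume "p \<in> ?P"
    then have "1 < real p" by (auto dest: prime_gt_1_nat)
    then show "(\<Sum>k=1..?M. inverse (real p powr \<sigma>) ^ k) \<le> 1 / (real p powr \<sigma> - 1)"
      using assms(1) by (intro sum_inverse_powers_le) simp
    show "0 \<le> C * t powr \<sigma> * ln (real p)" using \<open>1 < real p\<close> assms(2) by simp
  qed
  also have "\<dots> = C * t powr \<sigma> * (\<Sum>p\<in>?P. ln (real p) / (real p powr \<sigma> - 1))"
    by (simp add: sum_distrib_left)
  finally show ?thesis .
qed

lemma Psi_le_powr_large: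
  fixes t y :: real
  defines "\<sigma> \<equiv> 1 - 1 / (2 * ln y)"
  assumes y: "15 \<le> y" and t: "1 \<le> t" "8 * ln y < ln t"
    and IH: "\<And>s. s \<le> t / 2 \<Longrightarrow> real (Psi s y) \<le> 67.21 * s powr \<sigma>"
  shows "real (Psi t y) \<le> 67.21 * t powr \<sigma>"
proof -
  define T where "T = 67.21 * t powr \<sigma>"
  define D where "D = ln t - 4"
  have L: "5/2 \<le> ln y" using y by (rule five_halves_le_ln)
  have \<sigma>: "4/5 \<le> \<sigma>" using L by (simp add: \<sigma>_def field_simps)
  have T: "0 \<le> T" by (simp add: T_def)
  have D: "0 < D" "5 * ln y + 5/3 \<le> 15/16 * D" using t(2) L by (simp_all add: D_def)
  have "(\<Sum>n\<in>smooth_numbers t y. ln (real n))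
      \<le> T * (\<Sum>p | prime p \<and> real p \<le> y. ln (real p) / (real p powr \<sigma> - 1))"
    unfolding T_def
  proof (rule sum_ln_smooth_le_powr)
    fix p k :: nat assume p: "prime p" and k: "1 \<le> k"
    have "2 \<le> real p" using prime_ge_2_nat[OF p] by simp
    also have "\<dots> \<le> real p ^ k" using k \<open>2 \<le> real p\<close> by (simp add: self_le_power)
    finally have "t / real p ^ k \<le> t / 2" using t(1) prime_gt_0_nat[OF p] by (intro divide_left_mono) auto
    then show "real (Psi (t / real p ^ k) y) \<le> 67.21 * (t / real p ^ k) powr \<sigma>" by (rule IH)
  qed (use \<sigma> t in auto)
  also have "\<dots> \<le> T * (5 * ln y + 5/3)"
    using sum_ln_div_powr_minus_one_le[OF y] T unfolding \<sigma>_def by (rule mult_left_mono)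
  finally have sum_ln: "(\<Sum>n\<in>smooth_numbers t y. ln (real n)) \<le> T * (5 * ln y + 5/3)" .
  have "2 \<le> exp (4::real)" using exp_ge_add_one_self[of 4] by simp
  then have half: "t / exp 4 \<le> t / 2" using t(1) by (intro divide_left_mono) auto
  then have "real (Psi (t / exp 4) y) \<le> 67.21 * (t / exp 4) powr \<sigma>" by (rule IH)
  also have "\<dots> = T / exp (4 * \<sigma>)"
    using t(1) by (simp add: T_def powr_divide exp_powr_real)
  also have "\<dots> \<le> T / 16"
  proof (rule divide_left_mono[OF _ T])
    have "(16::real) \<le> exp (10 * (8/25))"
      using exp_of_nat_mult_bounds(1)[of "8/25" 10] by (simp add: power_divide)
    also have "\<dots> \<le> exp (4 * \<sigma>)" using \<sigma> by simp
    finally show "16 \<le> exp (4 * \<sigma>)" .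
  qed simp
  finally have small: "real (Psi (t / exp 4) y) \<le> T / 16" .
  have "real (Psi t y) * D \<le> (\<Sum>n\<in>smooth_numbers t y. ln (real n)) + D * real (Psi (t / exp 4) y)"
    using Psi_mul_ln_le[of "t / exp 4" t y] half t(1) by (simp add: D_def ln_div)
  also have "\<dots> \<le> T * (15/16 * D) + D * (T / 16)"
  proof (rule add_mono)
    show "(\<Sum>n\<in>smooth_numbers t y. ln (real n)) \<le> T * (15/16 * D)"
      using sum_ln mult_left_mono[OF D(2) T] by (rule order_trans)
    show "D * real (Psi (t / exp 4) y) \<le> D * (T / 16)"
      using small D(1) by (simp add: mult_left_mono)
  qed
  also have "\<dots> = T * D" by (simp add: algebra_simps)
  finally show ?thesis using D(1) by (simp add: T_def)
qed

lemma Psi_le_powr: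
  fixes t y :: real
  assumes y: "15 \<le> y"
  shows "real (Psi t y) \<le> 67.21 * t powr (1 - 1 / (2 * ln y))"
proof (induction t rule: real_halving_induct)
  case (small t)
  then show ?case by (simp add: Psi_eq_0)
next
  case (step t)
  show ?case
  proof (cases "ln t \<le> 8 * ln y")
    case True
    have L: "5/2 \<le> ln y" using y by (rule five_halves_le_ln)
    have "t powr (1 / (2 * ln y)) = exp (ln t / (2 * ln y))"
      using step.hyps by (simp add: powr_def)
    also have "\<dots> \<le> exp 4" using True L by (simp add: field_simps)
    also have "\<dots> \<le> 67.21"
      using exp_of_nat_mult_bounds(2)[of "1/10" 40] by (simp add: power_divide)
    finally have "t powr (1 / (2 * ln y)) \<le> 67.21" .
    then have "t powr (1 - 1 / (2 * ln y)) * t powr (1 / (2 * ln y))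
        \<le> t powr (1 - 1 / (2 * ln y)) * 67.21"
      by (rule mult_left_mono) simp
    moreover have "t powr (1 - 1 / (2 * ln y)) * t powr (1 / (2 * ln y)) = t"
      using step.hyps by (simp add: powr_add[symmetric])
    moreover have "real (Psi t y) \<le> t" using step.hyps by (simp add: Psi_le)
    ultimately show ?thesis by (simp add: mult.commute)
  next
    case False
    then show ?thesis using Psi_le_powr_large[OF y step.hyps] step.IH by simp
  qed
qed

theorem lemma2:
  fixes x y :: real
  assumes "15 \<le> y" and "y < x"
  shows "real (Psi x y) \<le> 67.21 * x * exp (- (ln x / ln y) / 2)"
proof -
  have x: "0 < x" using assms by linarith
  have "0 < ln y" using assms(1) by simp
  have "x powr (1 - 1 / (2 * ln y)) = exp ((1 - 1 / (2 * ln y)) * ln x)"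
    using x by (simp add: powr_def)
  also have "\<dots> = exp (ln x + - (ln x / ln y) / 2)"
    using \<open>0 < ln y\<close> by (intro arg_cong[where f = exp]) (simp add: field_simps)
  also have "\<dots> = x * exp (- (ln x / ln y) / 2)"
    using x by (simp only: exp_add exp_ln)
  finally have "x powr (1 - 1 / (2 * ln y)) = x * exp (- (ln x / ln y) / 2)" .
  then show ?thesis using Psi_le_powr[OF assms(1), of x] by (simp add: mult.assoc)
qed

end
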